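(* For every $\phi\in\mathcal{L}_{\Box\!\!\rightarrow}$, if $\vdash\phi$ in $\mathbb{N}4\mathbb{CK}$, then $\phi\in\mathsf{N4CK}$ (i.e. $\phi$ is verified at every point of every Nelsonian conditional model).
   Context: $\mathcal{L}_{\Box\!\!\rightarrow}$ is built from propositional variables with $\wedge,\vee,\to$, strong negation $\sim$, and a binary would-conditional $\Box\!\!\rightarrow$; $\phi\Diamond\!\!\rightarrow\psi$ abbreviates $\sim(\phi\Box\!\!\rightarrow\sim\psi)$. Semantics: a Nelsonian conditional model is $\mathcal{M}=(W,\leq,R,V^+,V^-)$ with $W\neq\emptyset$, $\leq$ a preorder, $V^\pm$ assigning $\leq$-upward-closed sets to variables, $R\subseteq W\times(\mathcal{P}(W)\times\mathcal{P}(W))\times W$ (write $R_{(X,Y)}(w,v)$) such that for all $X,Y$: (c1) $w\leq w'$ and $R_{(X,Y)}(w,v)$ imply $R_{(X,Y)}(w',v')$ for some $v'\geq v$; (c2) $R_{(X,Y)}(w,v)$ and $v\leq v'$ imply $R_{(X,Y)}(w',v')$ for some $w'\geq w$. Verification $\models^+$ / falsification $\models^-$: atoms by $V^\pm$; $\wedge$ verified iff both verified, falsified iff one falsified; $\vee$ dually; $\sim$ swaps $\models^+,\models^-$; $w\models^+\psi\to\chi$ iff for all $v\geq w$, $v\models^+\psi$ implies $v\models^+\chi$; $w\models^-\psi\to\chi$ iff $w\models^+\psi$ and $w\models^-\chi$; $w\models^+\psi\Box\!\!\rightarrow\chi$ iff for all $v\geq w$ and $u$ with $R_{\|\psi\|}(v,u)$,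 $u\models^+\chi$; $w\models^-\psi\Box\!\!\rightarrow\chi$ iff some $u$ has $R_{\|\psi\|}(w,u)$ and $u\models^-\chi$; $\|\psi\|=(\{w\mid w\models^+\psi\},\{w\mid w\models^-\psi\})$. Abbreviations: $\leftrightarrow$ is mutual $\to$; $\phi\Rightarrow\psi:=(\phi\to\psi)\wedge(\sim\psi\to\sim\phi)$; $\phi\Leftrightarrow\psi:=(\phi\Rightarrow\psi)\wedge(\psi\Rightarrow\phi)$. $\mathbb{N}4\mathbb{CK}$: modus ponens; positive intuitionistic axiom schemes; $\sim\sim\phi\leftrightarrow\phi$, $\sim(\phi\wedge\psi)\leftrightarrow(\sim\phi\vee\sim\psi)$, $\sim(\phi\vee\psi)\leftrightarrow(\sim\phi\wedge\sim\psi)$, $\sim(\phi\to\psi)\leftrightarrow(\phi\wedge\sim\psi)$; (A1) $((\phi\Box\!\!\rightarrow\psi)\wedge(\phi\Box\!\!\rightarrow\chi))\Leftrightarrow(\phi\Box\!\!\rightarrow(\psi\wedge\chi))$; (A2) $(\sim(\phi\Box\!\!\rightarrow\psi)\wedge(\phi\Box\!\!\rightarrow\chi))\to\sim(\phi\Box\!\!\rightarrow(\psi\vee\sim\chi))$; (A3) $((\phi\Diamond\!\!\rightarrow\psi)\to(\phi\Box\!\!\rightarrow\chi))\to(\phi\Box\!\!\rightarrow(\psi\to\chi))$; (A4) $\phi\Box\!\!\rightarrow(\psi\to\psi)$; rules: from $\phi\Leftrightarrow\psi$ infer $(\phi\Box\!\!\rightarrow\chi)\Leftrightarrow(\psi\Box\!\!\rightarrow\chi)$;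 from $\phi\leftrightarrow\psi$ infer $(\chi\Box\!\!\rightarrow\phi)\leftrightarrow(\chi\Box\!\!\rightarrow\psi)$; from $\sim\phi\leftrightarrow\sim\psi$ infer $\sim(\chi\Box\!\!\rightarrow\phi)\leftrightarrow\sim(\chi\Box\!\!\rightarrow\psi)$. *)

theory Defs
  imports Main
begin

datatype 'a fm =
    Var 'a
  | Conj "'a fm" "'a fm"
  | Disj "'a fm" "'a fm"
  | Imp "'a fm" "'a fm"
  | SNeg "'a fm"
  | Cond "'a fm" "'a fm"

definition Might :: "'a fm \<Rightarrow> 'a fm \<Rightarrow> 'a fm" where
  "Might a b = SNeg (Cond a (SNeg b))"

definition Iff :: "'a fm \<Rightarrow> 'a fm \<Rightarrow> 'a fm" where
  "Iff a b = Conj (Imp a b) (Imp b a)"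

definition SImp :: "'a fm \<Rightarrow> 'a fm \<Rightarrow> 'a fm" where
  "SImp a b = Conj (Imp a b) (Imp (SNeg b) (SNeg a))"

definition SIff :: "'a fm \<Rightarrow> 'a fm \<Rightarrow> 'a fm" where
  "SIff a b = Conj (SImp a b) (SImp b a)"

text \<open>The world set W is the carrier type 'w (nonempty automatically).
  R (X,Y) w v stands for R_(X,Y)(w,v).\<close>

record ('w, 'a) ncmodel =
  le :: "'w \<Rightarrow> 'w \<Rightarrow> bool"
  R  :: "'w set \<times> 'w set \<Rightarrow> 'w \<Rightarrow> 'w \<Rightarrow> bool"
  Vp :: "'a \<Rightarrow> 'w set"
  Vn :: "'a \<Rightarrow> 'w set"

definition upclosed :: "('w \<Rightarrow> 'w \<Rightarrow> bool) \<Rightarrow> 'w set \<Rightarrow> bool" where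
  "upclosed r S \<longleftrightarrow> (\<forall>w v. w \<in> S \<longrightarrow> r w v \<longrightarrow> v \<in> S)"

definition is_model :: "('w, 'a) ncmodel \<Rightarrow> bool" where
  "is_model M \<longleftrightarrow>
     reflp (le M) \<and> transp (le M) \<and>
     (\<forall>p. upclosed (le M) (Vp M p)) \<and>
     (\<forall>p. upclosed (le M) (Vn M p)) \<and>
     (\<forall>X Y w w' v. le M w w' \<longrightarrow> R M (X, Y) w v \<longrightarrow>
         (\<exists>v'. le M v v' \<and> R M (X, Y) w' v')) \<and>
     (\<forall>X Y w v v'. R M (X, Y) w v \<longrightarrow> le M v v' \<longrightarrow>
         (\<exists>w'. le M w w' \<and> R M (X, Y) w' v'))"

text \<open>sat True = verification, sat False = falsification.\<close>

fun sat :: "bool \<Rightarrow> ('w, 'a) ncmodel \<Rightarrow> 'w \<Rightarrow> 'a fm \<Rightarrow> bool" where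
  "sat True M w (Var p) = (w \<in> Vp M p)"
| "sat False M w (Var p) = (w \<in> Vn M p)"
| "sat True M w (Conj a b) = (sat True M w a \<and> sat True M w b)"
| "sat False M w (Conj a b) = (sat False M w a \<or> sat False M w b)"
| "sat True M w (Disj a b) = (sat True M w a \<or> sat True M w b)"
| "sat False M w (Disj a b) = (sat False M w a \<and> sat False M w b)"
| "sat True M w (SNeg a) = sat False M w a"
| "sat False M w (SNeg a) = sat True M w a"
| "sat True M w (Imp a b) =
     (\<forall>v. le M w v \<longrightarrow> sat True M v a \<longrightarrow> sat True M v b)"
| "sat False M w (Imp a b) = (sat True M w a \<and> sat False M w b)"
| "sat True M w (Cond a b) =
     (\<forall>v u. le M w v \<longrightarrow>
        R M ({x. sat True M x a}, {x. sat False M x a}) v u \<longrightarrow> sat True M u b)"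
| "sat False M w (Cond a b) =
     (\<exists>u. R M ({x. sat True M x a}, {x. sat False M x a}) w u \<and> sat False M u b)"

inductive derivable :: "'a fm \<Rightarrow> bool" where
  MP: "derivable (Imp a b) \<Longrightarrow> derivable a \<Longrightarrow> derivable b"
| K: "derivable (Imp a (Imp b a))"
| S: "derivable (Imp (Imp a (Imp b c)) (Imp (Imp a b) (Imp a c)))"
| ConjE1: "derivable (Imp (Conj a b) a)"
| ConjE2: "derivable (Imp (Conj a b) b)"
| ConjI: "derivable (Imp a (Imp b (Conj a b)))"
| DisjI1: "derivable (Imp a (Disj a b))"
| DisjI2: "derivable (Imp b (Disj a b))"
| DisjE: "derivable (Imp (Imp a c) (Imp (Imp b c) (Imp (Disj a b) c)))"
| NN: "derivable (Iff (SNeg (SNeg a)) a)"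
| NConj: "derivable (Iff (SNeg (Conj a b)) (Disj (SNeg a) (SNeg b)))"
| NDisj: "derivable (Iff (SNeg (Disj a b)) (Conj (SNeg a) (SNeg b)))"
| NImp: "derivable (Iff (SNeg (Imp a b)) (Conj a (SNeg b)))"
| A1: "derivable (SIff (Conj (Cond a b) (Cond a c)) (Cond a (Conj b c)))"
| A2: "derivable (Imp (Conj (SNeg (Cond a b)) (Cond a c)) (SNeg (Cond a (Disj b (SNeg c)))))"
| A3: "derivable (Imp (Imp (Might a b) (Cond a c)) (Cond a (Imp b c)))"
| A4: "derivable (Cond a (Imp b b))"
| RA: "derivable (SIff a b) \<Longrightarrow> derivable (SIff (Cond a c) (Cond b c))"
| RC: "derivable (Iff a b) \<Longrightarrow> derivable (Iff (Cond c a) (Cond c b))"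
| RCN: "derivable (Iff (SNeg a) (SNeg b)) \<Longrightarrow>
          derivable (Iff (SNeg (Cond c a)) (SNeg (Cond c b)))"

end

theory Submission
  imports Defs
begin

text \<open>Verification and falsification are both persistent along the preorder (for a falsified
  conditional this is condition (c1)); this validates the intuitionistic axioms. Axiom (A3)
  needs (c2) in addition, to lift an \<open>R\<close>-successor of a world along the preorder. The three rules
  are sound because a conditional accesses its antecedent only through the pair of its
  verification and falsification sets, and its consequent only through one of these sets per
  polarity, so a valid (strong) equivalence makes the relevant sets equal.\<close>

lemma model_le_refl: "is_model M \<Longrightarrow> le M w w"
  unfolding is_model_def by (simp add: reflpD)

lemma model_le_trans: "is_model M \<Longrightarrow> le M u v \<Longrightarrow> le M v w \<Longrightarrow> le M u w"
  unfolding is_model_def by (meson transpD)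

lemma model_R_forth:
  "is_model M \<Longrightarrow> le M w w' \<Longrightarrow> R M (X, Y) w v \<Longrightarrow> \<exists>v'. le M v v' \<and> R M (X, Y) w' v'"
  unfolding is_model_def by blast

lemma model_R_back:
  "is_model M \<Longrightarrow> R M (X, Y) w v \<Longrightarrow> le M v v' \<Longrightarrow> \<exists>w'. le M w w' \<and> R M (X, Y) w' v'"
  unfolding is_model_def by blast

lemma sat_persistent:
  assumes M: "is_model M"
  shows "le M w v \<Longrightarrow> sat p M w phi \<Longrightarrow> sat p M v phi"
proof (induction phi arbitrary: p w v)
  case (Var x)
  with M show ?case
    unfolding is_model_def upclosed_def by (cases p) auto
next
  case (Conj a b)
  then show ?case by (cases p) auto
next
  case (Disj a b)
  then show ?case by (cases p) auto
next
  case (SNeg a)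
  then show ?case by (cases p) auto
next
  case (Imp a b)
  show ?case
  proof (cases p)
    case True
    with Imp.prems model_le_trans[OF M] show ?thesis by auto
  next
    case False
    with Imp show ?thesis by simp
  qed
next
  case (Cond a b)
  show ?case
  proof (cases p)
    case True
    with Cond.prems model_le_trans[OF M] show ?thesis by auto
  next
    case False
    let ?A = "({x. sat True M x a}, {x. sat False M x a})"
    from Cond.prems False obtain u where "R M ?A w u" "sat False M u b"
      by auto
    moreover from model_R_forth[OF M \<open>le M w v\<close> this(1)] obtain u' where
      "le M u u'" "R M ?A v u'"
      by blast
    ultimately show ?thesis
      using False Cond.IH(2) by auto
  qed
qed

lemma sat_Imp_mp:
  "is_model M \<Longrightarrow> sat True M w (Imp a b) \<Longrightarrow> sat True M w a \<Longrightarrow> sat True M w b"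
  using model_le_refl[of M w] by auto

lemma sat_Iff_iff:
  "is_model M \<Longrightarrow> sat True M w (Iff a b) \<Longrightarrow> sat True M w a \<longleftrightarrow> sat True M w b"
  unfolding Iff_def using sat_Imp_mp by auto

lemma sat_SIff_iff:
  assumes M: "is_model M" and equiv: "sat True M w (SIff a b)"
  shows "sat True M w a \<longleftrightarrow> sat True M w b" "sat False M w a \<longleftrightarrow> sat False M w b"
proof -
  from equiv have "sat True M w (Iff a b)" "sat True M w (Iff (SNeg a) (SNeg b))"
    unfolding SIff_def SImp_def Iff_def by auto
  from this[THEN sat_Iff_iff[OF M]] show
    "sat True M w a \<longleftrightarrow> sat True M w b" "sat False M w a \<longleftrightarrow> sat False M w b"
    by simp_all
qed

lemma sat_K: "is_model M \<Longrightarrow> sat True M w (Imp a (Imp b a))"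
  using sat_persistent by auto

lemma sat_S:
  "is_model M \<Longrightarrow> sat True M w (Imp (Imp a (Imp b c)) (Imp (Imp a b) (Imp a c)))"
  by simp (meson model_le_refl model_le_trans)

lemma sat_ConjI: "is_model M \<Longrightarrow> sat True M w (Imp a (Imp b (Conj a b)))"
  using sat_persistent by auto

lemma sat_DisjE:
  "is_model M \<Longrightarrow> sat True M w (Imp (Imp a c) (Imp (Imp b c) (Imp (Disj a b) c)))"
  by simp (meson model_le_refl model_le_trans)

lemma sat_A1: "sat True M w (SIff (Conj (Cond a b) (Cond a c)) (Cond a (Conj b c)))"
  by (auto simp: SIff_def SImp_def)

lemma sat_A2:
  "is_model M \<Longrightarrow>
    sat True M w (Imp (Conj (SNeg (Cond a b)) (Cond a c)) (SNeg (Cond a (Disj b (SNeg c)))))"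
  by simp (meson model_le_refl)

lemma sat_A3:
  assumes M: "is_model M"
  shows "sat True M w (Imp (Imp (Might a b) (Cond a c)) (Cond a (Imp b c)))"
proof -
  let ?A = "({x. sat True M x a}, {x. sat False M x a})"
  have "sat True M u' c"
    if hyp: "sat True M v (Imp (Might a b) (Cond a c))"
      and "le M v v'" "R M ?A v' u" "le M u u'" "sat True M u' b" for v v' u u'
  proof -
    from model_R_back[OF M \<open>R M ?A v' u\<close> \<open>le M u u'\<close>] obtain v'' where
      "le M v' v''" "R M ?A v'' u'"
      by blast
    with \<open>sat True M u' b\<close> have "sat True M v'' (Might a b)"
      unfolding Might_def by auto
    moreover from \<open>le M v v'\<close> \<open>le M v' v''\<close>
    have "sat True M v'' (Imp (Might a b) (Cond a c))"
      using sat_persistent[OF M _ hyp] model_le_trans[OF M] by blast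
    ultimately have "sat True M v'' (Cond a c)"
      using sat_Imp_mp[OF M] by blast
    with \<open>R M ?A v'' u'\<close> show "sat True M u' c"
      using model_le_refl[OF M] by auto
  qed
  then show ?thesis
    by auto
qed

lemma sat_RA:
  assumes M: "is_model M" and equiv: "\<And>x. sat True M x (SIff a b)"
  shows "sat True M w (SIff (Cond a c) (Cond b c))"
proof -
  have "sat True M x a \<longleftrightarrow> sat True M x b" "sat False M x a \<longleftrightarrow> sat False M x b" for x
    using sat_SIff_iff[OF M equiv] by blast+
  then show ?thesis
    by (simp add: SIff_def SImp_def)
qed

lemma sat_RC:
  assumes M: "is_model M" and equiv: "\<And>x. sat True M x (Iff a b)"
  shows "sat True M w (Iff (Cond c a) (Cond c b))"
proof -
  have "sat True M x a \<longleftrightarrow> sat True M x b" for x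
    using sat_Iff_iff[OF M equiv] .
  then show ?thesis
    by (simp add: Iff_def)
qed

lemma sat_RCN:
  assumes M: "is_model M" and equiv: "\<And>x. sat True M x (Iff (SNeg a) (SNeg b))"
  shows "sat True M w (Iff (SNeg (Cond c a)) (SNeg (Cond c b)))"
proof -
  have "sat False M x a \<longleftrightarrow> sat False M x b" for x
    using sat_Iff_iff[OF M equiv] by simp
  then show ?thesis
    by (simp add: Iff_def)
qed

theorem lemma3:
  fixes phi :: "'a fm"
  assumes "derivable phi"
  shows "\<forall>(M :: ('w, 'a) ncmodel) w. is_model M \<longrightarrow> sat True M w phi"
  using assms
proof induction
  case (MP a b)
  then show ?case using sat_Imp_mp by meson
next
  case (RA a b c)
  then show ?case using sat_RA by meson
next
  case (RC a b c)
  then show ?case using sat_RC by meson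
next
  case (RCN a b c)
  then show ?case using sat_RCN by meson
qed (simp add: Iff_def; fail | blast intro: sat_K sat_S sat_ConjI sat_DisjE sat_A1 sat_A2 sat_A3)+

end
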